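(* Let $X$ be a continuous-time Markov chain on a countable state space $\mathbb S$ with generator $\mathcal L$. Suppose there exist a finite set $K\subset\mathbb S$ and a positive function $V$ on $\mathbb S$, bounded from above, such that $\mathcal LV(x)\le-1$ for all $x\in\mathbb S\setminus K$. If there exists $z\in K$ lying in a closed, irreducible component of $\mathbb S$, and there exists $y\in\mathbb S$ reachable from $z$ with $V(y)<\inf_{x\in K}V(x)$, then $X$ is explosive.
   Context: For a continuous-time Markov chain with transition rates $q(x,x')$, $\mathcal LV(x)=\sum_{x'\ne x}q(x,x')\big(V(x')-V(x)\big)$. A set of states is closed if the chain cannot leave it, and irreducible if every state in it is reachable from every other. $X$ is explosive if from some initial state it makes infinitely many jumps in finite time with positive probability. *)

theory Defs
  imports "HOL-Analysis.Analysis"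
begin

text \<open>A continuous-time Markov chain on a countable state space (the type 'a) is given
by its transition rates q x x' (for x' \<noteq> x).\<close>

definition ctmc_rates :: "('a::countable \<Rightarrow> 'a \<Rightarrow> real) \<Rightarrow> bool" where
  "ctmc_rates q \<longleftrightarrow> (\<forall>x x'. x' \<noteq> x \<longrightarrow> 0 \<le> q x x') \<and>
                     (\<forall>x. (q x) summable_on (UNIV - {x}))"

definition total_rate :: "('a \<Rightarrow> 'a \<Rightarrow> real) \<Rightarrow> 'a \<Rightarrow> real" where
  "total_rate q x = (\<Sum>\<^sub>\<infinity>x'\<in>UNIV - {x}. q x x')"

definition generator :: "('a \<Rightarrow> 'a \<Rightarrow> real) \<Rightarrow> ('a \<Rightarrow> real) \<Rightarrow> 'a \<Rightarrow> real" where
  "generator q V x = (\<Sum>\<^sub>\<infinity>x'\<in>UNIV - {x}. q x x' * (V x' - V x))"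

definition step_rel :: "('a \<Rightarrow> 'a \<Rightarrow> real) \<Rightarrow> ('a \<times> 'a) set" where
  "step_rel q = {(x, x'). x \<noteq> x' \<and> 0 < q x x'}"

definition reachable :: "('a \<Rightarrow> 'a \<Rightarrow> real) \<Rightarrow> 'a \<Rightarrow> 'a \<Rightarrow> bool" where
  "reachable q x y \<longleftrightarrow> (x, y) \<in> (step_rel q)\<^sup>*"

definition closed_set :: "('a \<Rightarrow> 'a \<Rightarrow> real) \<Rightarrow> 'a set \<Rightarrow> bool" where
  "closed_set q C \<longleftrightarrow> (\<forall>x\<in>C. \<forall>x'. x' \<noteq> x \<and> x' \<notin> C \<longrightarrow> q x x' = 0)"

definition irreducible_set :: "('a \<Rightarrow> 'a \<Rightarrow> real) \<Rightarrow> 'a set \<Rightarrow> bool" where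
  "irreducible_set q C \<longleftrightarrow> (\<forall>x\<in>C. \<forall>y\<in>C. reachable q x y)"

text \<open>Law of the jump times of the (minimal) chain started at x:
  jump_time_cdf q n x t = P_x(J_n \<le> t), where J_n is the time of the n-th jump
  (J_0 = 0; J_n = \<infinity> if the chain is absorbed before the n-th jump).
  After a holding time ~ Exp(q(x)) the chain jumps to x' with probability q(x,x')/q(x).\<close>
fun jump_time_cdf :: "('a::countable \<Rightarrow> 'a \<Rightarrow> real) \<Rightarrow> nat \<Rightarrow> 'a \<Rightarrow> real \<Rightarrow> ennreal" where
  "jump_time_cdf q 0 x t = (if 0 \<le> t then 1 else 0)"
| "jump_time_cdf q (Suc n) x t =
     (if total_rate q x = 0 then 0 else
       \<integral>\<^sup>+ s. indicator {0..t} s * ennreal (total_rate q x * exp (- total_rate q x * s)) *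
          (\<integral>\<^sup>+ x'. ennreal (q x x' / total_rate q x) * jump_time_cdf q n x' (t - s)
              \<partial>count_space (UNIV - {x})) \<partial>lborel)"

text \<open>Explosion probability from x: P_x(sup_n J_n < \<infinity>)
  = P_x(\<Union>t. \<Inter>n. {J_n \<le> t}) = sup_t inf_n P_x(J_n \<le> t) (continuity of measure).\<close>
definition explosion_prob :: "('a::countable \<Rightarrow> 'a \<Rightarrow> real) \<Rightarrow> 'a \<Rightarrow> ennreal" where
  "explosion_prob q x = (SUP t. INF n. jump_time_cdf q n x t)"

definition explosive :: "('a::countable \<Rightarrow> 'a \<Rightarrow> real) \<Rightarrow> bool" where
  "explosive q \<longleftrightarrow> (\<exists>x. 0 < explosion_prob q x)"

end

theory Submission
  imports Defs "HOL-Probability.Probability"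
begin

text \<open>Let \<open>m = inf\<^sub>K V\<close> and let \<open>J\<^sub>n\<close> be the time of the \<open>n\<close>-th jump. Off \<open>K\<close> the drift
  condition makes \<open>V(X\<^sub>t) + t\<close> a supermartingale, while \<open>V \<ge> m\<close> on \<open>K\<close>; conditioning on the
  first jump and inducting on \<open>n\<close> turns this into \<open>t P\<^sub>x(J\<^sub>n > t) \<le> V(x) (1 + t/m)\<close> for all
  \<open>n\<close> and \<open>t\<close>. At a state \<open>y\<close> with \<open>V(y) < m\<close> a large \<open>t\<close> makes the right-hand side smaller
  than \<open>t\<close>, so \<open>P\<^sub>y(J\<^sub>n \<le> t)\<close> is bounded away from \<open>0\<close> uniformly in \<open>n\<close> and the chain
  explodes from \<open>y\<close>.\<close>

lemma ennreal_add_le: "ennreal (x + y) \<le> ennreal x + ennreal y"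
  by (cases "0 \<le> x"; cases "0 \<le> y")
     (auto simp: ennreal_neg intro: ennreal_leI add_increasing add_increasing2)

lemma ennreal_diff_le_of_le_add:
  assumes "ennreal a \<le> X + ennreal c" and "0 \<le> c"
  shows "ennreal (a - c) \<le> X"
proof -
  have "ennreal (a - c) = ennreal a - ennreal c" using assms(2) by (simp add: ennreal_minus)
  also have "\<dots> \<le> X" unfolding ennreal_minus_le_iff using assms(1) by (simp add: add.commute)
  finally show ?thesis .
qed

lemma ennreal_divide_le_iff:
  assumes "0 < t"
  shows "ennreal (a / t) \<le> X \<longleftrightarrow> ennreal a \<le> ennreal t * X"
proof (cases "a \<le> 0")
  case True
  then show ?thesis using assms by (simp add: ennreal_neg divide_nonpos_pos)
next
  case False
  then have "ennreal a = ennreal t * ennreal (a / t)"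
    using assms by (simp flip: ennreal_mult)
  then show ?thesis using assms by (simp add: ennreal_mult_le_mult_iff)
qed

lemma nn_integral_count_space_eq_infsum:
  fixes f :: "'b \<Rightarrow> real"
  assumes "f summable_on A" and "\<And>x. x \<in> A \<Longrightarrow> 0 \<le> f x"
  shows "(\<integral>\<^sup>+x. ennreal (f x) \<partial>count_space A) = ennreal (infsum f A)"
proof -
  have "Infinite_Sum.abs_summable_on f A"
    using assms(1) summable_on_iff_abs_summable_on_real by blast
  then have "Infinite_Set_Sum.abs_summable_on f A" using abs_summable_equivalent by blast
  then show ?thesis using nn_integral_conv_infsetsum[of f A] assms infsetsum_infsum by metis
qed

lemma nn_integral_exponential_density_ge:
  assumes L: "0 < L" and t: "0 < t" and a: "a \<le> t"
  shows "ennreal ((a - 1/L) / t) \<le>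
    (\<integral>\<^sup>+ s. indicator {0..t} s * ennreal (L * exp (- L * s)) * ennreal ((a - s) / t) \<partial>lborel)"
proof -
  let ?g = "\<lambda>s. ennreal (exponential_density L s)"
  have beyond_t: "ennreal ((a - s) / t) = 0" if "t < s" for s
    using that a t by (simp add: ennreal_eq_0_iff divide_nonpos_pos)
  have eq: "(\<integral>\<^sup>+ s. indicator {0..t} s * ennreal (L * exp (- L * s)) * ennreal ((a - s) / t) \<partial>lborel)
      = (\<integral>\<^sup>+ s. ?g s * ennreal ((a - s) / t) \<partial>lborel)"
    by (intro nn_integral_cong)
       (auto simp: exponential_density_def beyond_t mult.commute split: split_indicator)
  have moment0: "(\<integral>\<^sup>+ s. ?g s \<partial>lborel) = 1"
    using nn_integral_erlang_ith_moment[OF L, of 0 0] by simp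
  have moment1: "(\<integral>\<^sup>+ s. ennreal (exponential_density L s * s) \<partial>lborel) = ennreal (1/L)"
    using nn_integral_erlang_ith_moment[OF L, of 0 1] by simp
  have "ennreal (a / t) = (\<integral>\<^sup>+ s. ?g s * ennreal (a / t) \<partial>lborel)"
    by (simp add: nn_integral_multc moment0)
  also have "\<dots> \<le> (\<integral>\<^sup>+ s. ?g s * ennreal ((a - s) / t)
                      + ennreal (exponential_density L s * s) * ennreal (1/t) \<partial>lborel)"
  proof (intro nn_integral_mono)
    fix s :: real
    show "?g s * ennreal (a / t) \<le>
          ?g s * ennreal ((a - s) / t) + ennreal (exponential_density L s * s) * ennreal (1/t)"
    proof (cases "s < 0")
      case True then show ?thesis by (simp add: exponential_density_def)
    next
      case False
      have "0 \<le> exponential_density L s" using L by (rule exponential_density_nonneg)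
      then have "ennreal (exponential_density L s * s) * ennreal (1/t) = ?g s * ennreal (s / t)"
        using False t by (simp flip: ennreal_mult)
      moreover have "ennreal (a / t) \<le> ennreal ((a - s) / t) + ennreal (s / t)"
        using ennreal_add_le[of "(a - s) / t" "s / t"] by (simp add: diff_divide_distrib)
      ultimately show ?thesis by (simp add: distrib_left[symmetric] mult_left_mono)
    qed
  qed
  also have "\<dots> = (\<integral>\<^sup>+ s. ?g s * ennreal ((a - s) / t) \<partial>lborel) + ennreal (1/L) * ennreal (1/t)"
    by (subst nn_integral_add) (auto simp: nn_integral_multc moment1)
  also have "ennreal (1/L) * ennreal (1/t) = ennreal (1/L * (1/t))"
    using L t by (simp flip: ennreal_mult)
  finally have "ennreal (a / t - 1/L * (1/t)) \<le> (\<integral>\<^sup>+ s. ?g s * ennreal ((a - s) / t) \<partial>lborel)"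
    by (rule ennreal_diff_le_of_le_add) (use L t in simp)
  moreover have "a / t - 1/L * (1/t) = (a - 1/L) / t" by (simp add: diff_divide_distrib)
  ultimately show ?thesis using eq by simp
qed

lemma total_rate_nonneg: "ctmc_rates q \<Longrightarrow> 0 \<le> total_rate q x"
  unfolding ctmc_rates_def total_rate_def by (intro infsum_nonneg) auto

lemma summable_on_rate_mult_bounded:
  assumes q: "ctmc_rates q" and V: "\<And>x'. 0 \<le> V x'" "\<And>x'. V x' \<le> B"
  shows "(\<lambda>x'. q x x' * V x') summable_on (UNIV - {x})"
proof (rule summable_on_comparison_test[where f = "\<lambda>x'. B * q x x'"])
  have "(q x) summable_on (UNIV - {x})" using q unfolding ctmc_rates_def by blast
  then show "(\<lambda>x'. B * q x x') summable_on (UNIV - {x})" by (rule summable_on_cmult_right)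
  fix x' assume "x' \<in> UNIV - {x}"
  then have "0 \<le> q x x'" using q unfolding ctmc_rates_def by auto
  then have "q x x' * V x' \<le> q x x' * B" using V(2) by (simp add: mult_left_mono)
  then show "q x x' * V x' \<le> B * q x x'" by (simp add: mult.commute)
  show "0 \<le> q x x' * V x'" using \<open>0 \<le> q x x'\<close> V(1)[of x'] by simp
qed

lemma generator_eq_infsum_diff:
  assumes q: "ctmc_rates q" and sum: "(\<lambda>x'. q x x' * V x') summable_on (UNIV - {x})"
  shows "generator q V x = (\<Sum>\<^sub>\<infinity>x'\<in>UNIV - {x}. q x x' * V x') - total_rate q x * V x"
proof -
  let ?A = "UNIV - {x}"
  have qs: "(q x) summable_on ?A" using q unfolding ctmc_rates_def by blast
  have "generator q V x = (\<Sum>\<^sub>\<infinity>x'\<in>?A. q x x' * V x' + (- V x) * q x x')"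
    unfolding generator_def by (rule infsum_cong) (simp add: algebra_simps)
  also have "\<dots> = (\<Sum>\<^sub>\<infinity>x'\<in>?A. q x x' * V x') + (\<Sum>\<^sub>\<infinity>x'\<in>?A. (- V x) * q x x')"
    by (rule infsum_add[OF sum summable_on_cmult_right[OF qs]])
  also have "(\<Sum>\<^sub>\<infinity>x'\<in>?A. (- V x) * q x x') = - V x * total_rate q x"
    unfolding total_rate_def by (rule infsum_cmult_right[OF qs])
  finally show ?thesis by simp
qed

lemma jump_mean_bound_of_generator_le:
  assumes q: "ctmc_rates q" and V: "\<And>x'. 0 \<le> V x'"
    and sum: "(\<lambda>x'. q x x' * V x') summable_on (UNIV - {x})"
    and drift: "generator q V x \<le> -1"
  shows "0 < total_rate q x"
    and "(\<Sum>\<^sub>\<infinity>x'\<in>UNIV - {x}. q x x' * V x') / total_rate q x + 1 / total_rate q x \<le> V x"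
proof -
  let ?S = "\<Sum>\<^sub>\<infinity>x'\<in>UNIV - {x}. q x x' * V x'" and ?L = "total_rate q x"
  have S: "0 \<le> ?S" using q V unfolding ctmc_rates_def by (intro infsum_nonneg) simp
  have drift': "?S + 1 \<le> ?L * V x" using drift generator_eq_infsum_diff[OF q sum] by simp
  then show L: "0 < ?L" using S total_rate_nonneg[OF q, of x] by (cases "?L = 0") auto
  show "?S / ?L + 1 / ?L \<le> V x" using L drift' by (simp add: field_simps)
qed

lemma nn_integral_jump_distribution:
  assumes q: "ctmc_rates q" and L: "0 < total_rate q x"
    and f: "(\<lambda>x'. q x x' * f x') summable_on (UNIV - {x})" "\<And>x'. 0 \<le> f x'"
  shows "(\<integral>\<^sup>+ x'. ennreal (q x x' / total_rate q x) * ennreal (f x') \<partial>count_space (UNIV - {x}))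
    = ennreal ((\<Sum>\<^sub>\<infinity>x'\<in>UNIV - {x}. q x x' * f x') / total_rate q x)"
proof -
  let ?A = "UNIV - {x}" and ?L = "total_rate q x"
  have qn: "\<And>x'. x' \<in> ?A \<Longrightarrow> 0 \<le> q x x'" using q unfolding ctmc_rates_def by auto
  have "(\<integral>\<^sup>+ x'. ennreal (q x x' / ?L) * ennreal (f x') \<partial>count_space ?A)
      = (\<integral>\<^sup>+ x'. ennreal (q x x' * f x' * inverse ?L) \<partial>count_space ?A)"
    using qn L f(2) by (intro nn_integral_cong) (simp add: divide_inverse flip: ennreal_mult)
  also have "\<dots> = ennreal (\<Sum>\<^sub>\<infinity>x'\<in>?A. q x x' * f x' * inverse ?L)"
    using qn L f summable_on_cmult_left[OF f(1), of "inverse ?L"]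
    by (intro nn_integral_count_space_eq_infsum) auto
  finally show ?thesis
    using infsum_cmult_left'[of "\<lambda>x'. q x x' * f x'" "inverse ?L" ?A] by (simp add: divide_inverse)
qed

lemma nn_integral_jump_distribution_ge:
  fixes f :: "'a::countable \<Rightarrow> real" and G :: "'a \<Rightarrow> ennreal"
  assumes q: "ctmc_rates q" and L: "0 < total_rate q x"
    and f: "(\<lambda>x'. q x x' * f x') summable_on (UNIV - {x})" "\<And>x'. 0 \<le> f x'"
    and bound: "\<And>x'. ennreal u \<le> ennreal u * G x' + ennreal (f x')"
  shows "ennreal (u - (\<Sum>\<^sub>\<infinity>x'\<in>UNIV - {x}. q x x' * f x') / total_rate q x)
    \<le> ennreal u * (\<integral>\<^sup>+ x'. ennreal (q x x' / total_rate q x) * G x' \<partial>count_space (UNIV - {x}))"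
proof -
  let ?A = "UNIV - {x}" and ?L = "total_rate q x"
  let ?p = "\<lambda>x'. ennreal (q x x' / ?L)" and ?M = "(\<Sum>\<^sub>\<infinity>x'\<in>?A. q x x' * f x') / ?L"
  have "(\<lambda>x'. q x x' * 1) summable_on ?A" using q unfolding ctmc_rates_def by simp
  then have p_total: "(\<integral>\<^sup>+ x'. ?p x' \<partial>count_space ?A) = 1"
    using nn_integral_jump_distribution[OF q L, of "\<lambda>_. 1"] L by (simp add: total_rate_def)
  have "ennreal u = (\<integral>\<^sup>+ x'. ?p x' * ennreal u \<partial>count_space ?A)"
    by (simp add: nn_integral_multc p_total)
  also have "\<dots> \<le> (\<integral>\<^sup>+ x'. ennreal u * (?p x' * G x') + ?p x' * ennreal (f x') \<partial>count_space ?A)"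
  proof (intro nn_integral_mono)
    fix x'
    have "?p x' * ennreal u \<le> ?p x' * (ennreal u * G x' + ennreal (f x'))"
      using bound by (rule mult_left_mono) simp
    then show "?p x' * ennreal u \<le> ennreal u * (?p x' * G x') + ?p x' * ennreal (f x')"
      by (simp add: distrib_left mult.left_commute)
  qed
  also have "\<dots> = ennreal u * (\<integral>\<^sup>+ x'. ?p x' * G x' \<partial>count_space ?A) + ennreal ?M"
    by (simp add: nn_integral_add nn_integral_cmult nn_integral_jump_distribution[OF q L f])
  finally have "ennreal u \<le> ennreal u * (\<integral>\<^sup>+ x'. ?p x' * G x' \<partial>count_space ?A) + ennreal ?M" .
  moreover have "0 \<le> ?M" using L q f(2) unfolding ctmc_rates_def
    by (intro divide_nonneg_pos infsum_nonneg) auto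
  ultimately show ?thesis by (rule ennreal_diff_le_of_le_add)
qed

lemma jump_time_cdf_Suc_ge:
  assumes L: "0 < total_rate q x" and t: "0 < t" and c: "0 \<le> c"
    and first_jump: "\<And>s. 0 \<le> s \<Longrightarrow> s \<le> t \<Longrightarrow> ennreal (t - c - s) \<le> ennreal t *
      (\<integral>\<^sup>+ x'. ennreal (q x x' / total_rate q x) * jump_time_cdf q n x' (t - s) \<partial>count_space (UNIV - {x}))"
  shows "ennreal (t - c - 1 / total_rate q x) \<le> ennreal t * jump_time_cdf q (Suc n) x t"
proof -
  let ?L = "total_rate q x"
  let ?Q = "\<lambda>s. \<integral>\<^sup>+ x'. ennreal (q x x' / ?L) * jump_time_cdf q n x' (t - s) \<partial>count_space (UNIV - {x})"
  have "ennreal ((t - c - 1/?L) / t) \<le>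
      (\<integral>\<^sup>+ s. indicator {0..t} s * ennreal (?L * exp (- ?L * s)) * ennreal ((t - c - s) / t) \<partial>lborel)"
    using L t c by (intro nn_integral_exponential_density_ge) auto
  also have "\<dots> \<le> (\<integral>\<^sup>+ s. indicator {0..t} s * ennreal (?L * exp (- ?L * s)) * ?Q s \<partial>lborel)"
    using first_jump t by (intro nn_integral_mono)
      (auto split: split_indicator intro!: mult_left_mono simp: ennreal_divide_le_iff)
  also have "\<dots> = jump_time_cdf q (Suc n) x t" using L by simp
  finally show ?thesis using t by (simp add: ennreal_divide_le_iff)
qed

lemma jump_time_cdf_lyapunov_step:
  assumes q: "ctmc_rates q" and V: "\<And>x'. 0 \<le> V x'"
    and sum: "(\<lambda>x'. q x x' * V x') summable_on (UNIV - {x})"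
    and drift: "generator q V x \<le> -1" and t: "0 < t" and c: "1 \<le> c"
    and IH: "\<And>x' u. 0 \<le> u \<Longrightarrow> u \<le> t \<Longrightarrow>
      ennreal u \<le> ennreal u * jump_time_cdf q n x' u + ennreal (c * V x')"
  shows "ennreal t \<le> ennreal t * jump_time_cdf q (Suc n) x t + ennreal (c * V x)"
proof -
  let ?A = "UNIV - {x}" and ?L = "total_rate q x"
  define W where "W = (\<Sum>\<^sub>\<infinity>x'\<in>?A. q x x' * V x') / ?L"
  have L: "0 < ?L" and W: "W + 1 / ?L \<le> V x"
    using jump_mean_bound_of_generator_le[OF q V sum drift] by (simp_all add: W_def)
  have W_nonneg: "0 \<le> W" using L q V unfolding W_def ctmc_rates_def
    by (intro divide_nonneg_pos infsum_nonneg) auto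
  have cV_sum: "(\<lambda>x'. q x x' * (c * V x')) summable_on ?A"
    using summable_on_cmult_right[OF sum, of c] by (simp add: mult.left_commute)
  have cV_mean: "(\<Sum>\<^sub>\<infinity>x'\<in>?A. q x x' * (c * V x')) / ?L = c * W"
    using infsum_cmult_right[OF sum, of c] by (simp add: W_def mult.left_commute)
  have "ennreal (t - c * W - 1 / ?L) \<le> ennreal t * jump_time_cdf q (Suc n) x t"
  proof (rule jump_time_cdf_Suc_ge[OF L t])
    show "0 \<le> c * W" using c W_nonneg by simp
    fix s assume s: "0 \<le> s" "s \<le> t"
    have "ennreal (t - s - c * W) \<le> ennreal (t - s) *
        (\<integral>\<^sup>+ x'. ennreal (q x x' / ?L) * jump_time_cdf q n x' (t - s) \<partial>count_space ?A)"
      using nn_integral_jump_distribution_ge[OF q L cV_sum] IH[of "t - s"] s c V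
      by (simp add: cV_mean)
    also have "\<dots> \<le> ennreal t *
        (\<integral>\<^sup>+ x'. ennreal (q x x' / ?L) * jump_time_cdf q n x' (t - s) \<partial>count_space ?A)"
      using s by (intro mult_right_mono ennreal_leI) auto
    finally show "ennreal (t - c * W - s) \<le> ennreal t *
        (\<integral>\<^sup>+ x'. ennreal (q x x' / ?L) * jump_time_cdf q n x' (t - s) \<partial>count_space ?A)"
      by (simp add: algebra_simps)
  qed
  moreover have "c * W + 1 / ?L \<le> c * V x"
  proof -
    have "1 / ?L \<le> c * (1 / ?L)" using c L by (simp add: divide_right_mono)
    then have "c * W + 1 / ?L \<le> c * (W + 1 / ?L)" by (simp add: distrib_left)
    also have "\<dots> \<le> c * V x" using W c by (intro mult_left_mono) auto
    finally show ?thesis .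
  qed
  ultimately have "ennreal (t - c * W - 1 / ?L) + ennreal (c * W + 1 / ?L)
      \<le> ennreal t * jump_time_cdf q (Suc n) x t + ennreal (c * V x)"
    by (intro add_mono ennreal_leI)
  then show ?thesis using ennreal_add_le[of "t - c * W - 1 / ?L" "c * W + 1 / ?L"] by simp
qed

lemma jump_time_cdf_lyapunov_bound:
  assumes q: "ctmc_rates q" and V: "\<And>x. 0 < V x" "\<And>x. V x \<le> B"
    and drift: "\<And>x. x \<notin> K \<Longrightarrow> generator q V x \<le> -1"
    and m: "0 < m" "\<And>x. x \<in> K \<Longrightarrow> m \<le> V x"
  shows "0 \<le> t \<Longrightarrow> ennreal t \<le> ennreal t * jump_time_cdf q n x t + ennreal ((1 + t / m) * V x)"
proof (induction n arbitrary: x t)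
  case 0
  then show ?case by (simp add: add_increasing2)
next
  case (Suc n)
  show ?case
  proof (cases "x \<in> K \<or> t = 0")
    case True
    have "t \<le> (1 + t / m) * V x"
    proof (cases "x \<in> K")
      case True
      then have "m * t \<le> V x * t" using m Suc.prems by (intro mult_right_mono) auto
      then have "t \<le> t / m * V x" using m by (simp add: field_simps)
      then show ?thesis using V(1)[of x] by (simp add: algebra_simps)
    qed (use True V(1)[of x] in auto)
    then show ?thesis by (simp add: add_increasing ennreal_leI)
  next
    case False
    then have x: "x \<notin> K" and t: "0 < t" using Suc.prems by auto
    show ?thesis
    proof (rule jump_time_cdf_lyapunov_step[OF q _ _ drift[OF x] t])
      show "(\<lambda>x'. q x x' * V x') summable_on (UNIV - {x})"
        using V by (intro summable_on_rate_mult_bounded[OF q]) (auto simp: less_imp_le)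
      fix x' u assume u: "0 \<le> u" "u \<le> t"
      have "(1 + u / m) * V x' \<le> (1 + t / m) * V x'"
        using u m V(1)[of x'] by (intro mult_right_mono) (auto simp: divide_right_mono)
      then show "ennreal u \<le> ennreal u * jump_time_cdf q n x' u + ennreal ((1 + t / m) * V x')"
        using Suc.IH[OF u(1), of x'] by (auto elim!: order_trans intro!: add_left_mono ennreal_leI)
    qed (use V(1) m t in \<open>auto simp: less_imp_le\<close>)
  qed
qed

lemma jump_time_cdf_ge:
  assumes q: "ctmc_rates q" and V: "\<And>x. 0 < V x" "\<And>x. V x \<le> B"
    and drift: "\<And>x. x \<notin> K \<Longrightarrow> generator q V x \<le> -1"
    and m: "0 < m" "\<And>x. x \<in> K \<Longrightarrow> m \<le> V x"
    and t: "0 < t"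
  shows "ennreal (1 - (1 / t + 1 / m) * V x) \<le> jump_time_cdf q n x t"
proof -
  have "ennreal t \<le> ennreal t * jump_time_cdf q n x t + ennreal ((1 + t / m) * V x)"
    using jump_time_cdf_lyapunov_bound[OF q V drift m] t by simp
  then have "ennreal (t - (1 + t / m) * V x) \<le> ennreal t * jump_time_cdf q n x t"
    by (rule ennreal_diff_le_of_le_add) (use V(1)[of x] t m in simp)
  moreover have "(t - (1 + t / m) * V x) / t = 1 - (1 / t + 1 / m) * V x"
    using t by (simp add: field_simps)
  ultimately show ?thesis using t by (metis ennreal_divide_le_iff)
qed

lemma explosive_if_jump_time_cdf_ge:
  assumes "0 < c" and "\<And>n. ennreal c \<le> jump_time_cdf q n x t"
  shows "explosive q"
proof -
  have "ennreal c \<le> (INF n. jump_time_cdf q n x t)" by (intro INF_greatest assms(2))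
  also have "\<dots> \<le> explosion_prob q x" unfolding explosion_prob_def by (rule SUP_upper) simp
  finally have "0 < explosion_prob q x" using assms(1) by (simp add: less_le_trans[rotated])
  then show ?thesis unfolding explosive_def by blast
qed

theorem corollaryA5:
  fixes q :: "'a::countable \<Rightarrow> 'a \<Rightarrow> real" and V :: "'a \<Rightarrow> real" and K :: "'a set"
  assumes "ctmc_rates q"
    and "finite K"
    and "\<And>x. 0 < V x"
    and "\<exists>B. \<forall>x. V x \<le> B"
    and "\<And>x. x \<notin> K \<Longrightarrow> generator q V x \<le> -1"
    and "\<exists>z\<in>K. \<exists>C. closed_set q C \<and> irreducible_set q C \<and> z \<in> C \<and>
           (\<exists>y. reachable q z y \<and> V y < (INF x\<in>K. V x))"
  shows "explosive q"
proof -
  obtain B where B: "\<And>x. V x \<le> B" using assms(4) by blast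
  define m where "m = (INF x\<in>K. V x)"
  obtain y where y: "V y < m" using assms(6) unfolding m_def by blast
  have mK: "\<And>x. x \<in> K \<Longrightarrow> m \<le> V x"
    unfolding m_def using assms(2) by (intro cINF_lower) (auto intro: bdd_below_finite)
  have m: "0 < m" using y assms(3)[of y] by simp
  define t where "t = 2 * V y * m / (m - V y)"
  have t: "0 < t" using y m assms(3)[of y] by (simp add: t_def)
  have "V y / t = (m - V y) / (2 * m)"
    using y m assms(3)[of y] by (simp add: t_def)
  then have "1 - (1 / t + 1 / m) * V y = (m - V y) / (2 * m)"
    using m by (simp add: algebra_simps) (simp add: field_simps)
  then have c: "0 < 1 - (1 / t + 1 / m) * V y" using y m by simp
  show ?thesis
    using c jump_time_cdf_ge[OF assms(1) assms(3) B assms(5) m mK t]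
    by (rule explosive_if_jump_time_cdf_ge)
qed

end
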